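(* For any matrix $A\in\mathbb{R}^{m\times n}$ and $p\in\mathbb{Q}\cap(2,\infty)$, the dual problem of the maximization problem defining $\|A\|_{p_v}$ (given in the context) is $$ \begin{array}{lll} \|A\|_{p_v}= &\min & u_1+ u_2+\theta_p\sum_{i=1}^{m+n} t_i \\ &\textnormal{s.t.} & {v_i}^{p/(p-2)}\le t_i {u_1}^{2/(p-2)}\quad i=1,2,\dots, m \\ && {v_i}^{p/(p-2)}\le t_i {u_2}^{2/(p-2)}\quad i=m+1,m+2,\dots, m+n\\ && u_1\ge0, \,u_2\ge 0, \, \boldsymbol{t}\ge {\bf 0},\, D(\boldsymbol{v})\succeq \begin{pmatrix} O & A/2 \\ A^{\textnormal{T}}/2 & O \end{pmatrix}, \end{array} $$ where $\theta_p:=(2/p)^{2/(p-2)}-(2/p)^{p/(p-2)}>0$ when $p\in(2,\infty)$, and strong duality holds so the optimal value equals $\|A\|_{p_v}$.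
   Context: For $A\in\mathbb{R}^{m\times n}$ and $p\in\mathbb{Q}\cap(2,\infty)$, $$ \|A\|_{p_v}:= \max \left\{\left\langle \begin{pmatrix} O & A/2 \\ A^{\textnormal{T}}/2 & O \end{pmatrix}, X\right\rangle: \sum_{i=1}^m|x_{i i}|^{p/2} \le 1,\ \sum_{i=m+1}^{m+n}|x_{ii}|^{p/2} \le 1,\ X \succeq O\right\}, $$ with $X\in\mathbb{R}^{(m+n)\times(m+n)}$ symmetric. $D(\boldsymbol{v})$ denotes the diagonal matrix with diagonal vector $\boldsymbol{v}\in\mathbb{R}^{m+n}$; $\succeq$ is the positive semidefinite order. *)

theory Defs
  imports "HOL-Analysis.Analysis"
begin

text \<open>Matrices of size m x n are represented as real^'n^'m (m rows, n columns);
 (m+n) x (m+n) matrices are indexed by the sum type 'm + 'n, where Inl i stands for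
 index i in 1..m and Inr j for index m+j.\<close>

definition psd :: "real^'k::finite^'k \<Rightarrow> bool" where
  "psd X \<longleftrightarrow> (\<forall>x::real^'k. 0 \<le> x \<bullet> (X *v x))"

definition diag_mat :: "real^'k \<Rightarrow> real^'k^'k" where
  "diag_mat v = (\<chi> i j. if i = j then v $ i else 0)"

definition half_block :: "real^'n^'m \<Rightarrow> real^('m + 'n)^('m + 'n)" where
  "half_block A = (\<chi> i j. case (i, j) of
      (Inl a, Inr b) \<Rightarrow> A $ a $ b / 2
    | (Inr b, Inl a) \<Rightarrow> A $ a $ b / 2
    | _ \<Rightarrow> 0)"

definition frob_inner :: "real^'k^'k \<Rightarrow> real^'k^'k \<Rightarrow> real" where
  "frob_inner M X = (\<Sum>i\<in>UNIV. \<Sum>j\<in>UNIV. M $ i $ j * X $ i $ j)"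

definition pv_primal_feasible :: "real \<Rightarrow> real^('m::finite + 'n::finite)^('m + 'n) \<Rightarrow> bool" where
  "pv_primal_feasible p X \<longleftrightarrow>
     transpose X = X \<and> psd X \<and>
     (\<Sum>i\<in>UNIV. \<bar>X $ Inl i $ Inl i\<bar> powr (p/2)) \<le> 1 \<and>
     (\<Sum>j\<in>UNIV. \<bar>X $ Inr j $ Inr j\<bar> powr (p/2)) \<le> 1"

definition pv_norm :: "real \<Rightarrow> real^'n::finite^'m::finite \<Rightarrow> real" where
  "pv_norm p A = Sup {frob_inner (half_block A) X | X. pv_primal_feasible p X}"

definition theta :: "real \<Rightarrow> real" where
  "theta p = (2/p) powr (2/(p-2)) - (2/p) powr (p/(p-2))"

definition pv_dual_feasible ::
  "real \<Rightarrow> real^'n::finite^'m::finite \<Rightarrow> real \<Rightarrow> real \<Rightarrow> real^('m + 'n) \<Rightarrow> real^('m + 'n) \<Rightarrow> bool" where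
  "pv_dual_feasible p A u1 u2 t v \<longleftrightarrow>
     (\<forall>i. (v $ Inl i) powr (p/(p-2)) \<le> t $ Inl i * u1 powr (2/(p-2))) \<and>
     (\<forall>j. (v $ Inr j) powr (p/(p-2)) \<le> t $ Inr j * u2 powr (2/(p-2))) \<and>
     u1 \<ge> 0 \<and> u2 \<ge> 0 \<and> (\<forall>i. t $ i \<ge> 0) \<and>
     psd (diag_mat v - half_block A)"

definition pv_dual_obj :: "real \<Rightarrow> real \<Rightarrow> real \<Rightarrow> real^'k \<Rightarrow> real" where
  "pv_dual_obj p u1 u2 t = u1 + u2 + theta p * (\<Sum>i\<in>UNIV. t $ i)"

end

theory Submission
  imports Defs
begin

(* Weak duality: diag(v) - H and X are both positive semidefinite, so <H, X> <= sum_k v_k X_kk, and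
   weighted AM-GM with weights 2/p and 1 - 2/p bounds each v_k X_kk by u X_kk^(p/2) + theta_p t_k;
   summing over a block uses sum_k X_kk^(p/2) <= 1.
   Strong duality: separating the origin from the convex set of pairs (diag X - d, r) with X
   positive semidefinite, d in the product C of the two l_(p/2) unit balls and r below
   <H, X> - norm yields a multiplier v with diag(v) >= H and v . d <= norm on C.  On each block the
   best (u, t) for the positive part of v has value the l_(p/(p-2)) norm of v_+, the support
   function of the l_(p/2) ball, so the dual value does not exceed the norm. *)

section \<open>Positive semidefinite matrices\<close>

definition frob_on :: "'a set \<Rightarrow> ('a \<Rightarrow> 'a \<Rightarrow> real) \<Rightarrow> ('a \<Rightarrow> 'a \<Rightarrow> real) \<Rightarrow> real" where
  "frob_on K M X = (\<Sum>i\<in>K. \<Sum>j\<in>K. M i j * X i j)"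

definition quad_form :: "'a set \<Rightarrow> ('a \<Rightarrow> 'a \<Rightarrow> real) \<Rightarrow> ('a \<Rightarrow> real) \<Rightarrow> real" where
  "quad_form K X x = (\<Sum>i\<in>K. \<Sum>j\<in>K. x i * X i j * x j)"

lemma sum_mult_of_bool_eq:
  fixes f :: "'a \<Rightarrow> real"
  assumes "finite K" "a \<in> K"
  shows "(\<Sum>j\<in>K. f j * of_bool (j = a)) = f a"
proof -
  have "(\<Sum>j\<in>K. f j * of_bool (j = a)) = (\<Sum>j\<in>K. if j = a then f j else 0)"
    by (rule sum.cong) auto
  then show ?thesis using assms by simp
qed

lemma sum_mult_two_point_eq:
  fixes f :: "'a \<Rightarrow> real"
  assumes "finite K" "a \<in> K" "b \<in> K"
  shows "(\<Sum>j\<in>K. f j * (of_bool (j = a) + w * of_bool (j = b))) = f a + w * f b"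
  using assms by (simp add: distrib_left sum.distrib mult.left_commute[of _ w]
      sum_mult_of_bool_eq flip: sum_distrib_left)

lemma quad_form_two_point:
  assumes "finite K" "a \<in> K" "b \<in> K"
  shows "quad_form K X (\<lambda>i. of_bool (i = a) + w * of_bool (i = b))
       = X a a + w * (X a b + X b a) + w * w * X b b"
proof -
  let ?x = "\<lambda>i. of_bool (i = a) + w * of_bool (i = b)"
  have "quad_form K X ?x = (\<Sum>i\<in>K. (\<Sum>j\<in>K. X i j * ?x j) * ?x i)"
    unfolding quad_form_def sum_distrib_right by (simp add: mult_ac)
  also have "\<dots> = (\<Sum>i\<in>K. (X i a + w * X i b) * ?x i)"
    using assms by (simp add: sum_mult_two_point_eq)
  also have "\<dots> = X a a + w * (X a b + X b a) + w * w * X b b"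
    using assms by (subst sum_mult_two_point_eq) (simp_all add: algebra_simps)
  finally show ?thesis .
qed

lemma quad_form_unit:
  assumes "finite K" "a \<in> K"
  shows "quad_form K X (\<lambda>i. of_bool (i = a)) = X a a"
  using quad_form_two_point[OF assms assms(2), of X 0] by simp

lemma linear_coeff_zero_if_quadratic_nonneg:
  fixes c d :: real
  assumes nonneg: "\<And>w. 0 \<le> w * c + w * w * d"
  shows "c = 0"
proof (rule ccontr)
  assume "c \<noteq> 0"
  have "0 \<le> d" using nonneg[of 1] nonneg[of "-1"] by simp
  define w where "w = - c / (d + 1)"
  have "w * c + w * w * d = - (c / (d + 1))\<^sup>2"
    using \<open>0 \<le> d\<close> unfolding w_def power2_eq_square by (simp add: divide_simps) algebra
  also have "\<dots> < 0" using \<open>c \<noteq> 0\<close> \<open>0 \<le> d\<close> by simp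
  finally show False using nonneg[of w] by simp
qed

lemma psd_form_diag_nonneg:
  assumes "finite K" "a \<in> K" "\<forall>x. 0 \<le> quad_form K X x"
  shows "0 \<le> X a a"
  using assms(3) quad_form_unit[OF assms(1,2)] by metis

lemma psd_form_zero_diag:
  assumes "finite K" "a \<in> K" "b \<in> K" "\<forall>x. 0 \<le> quad_form K X x" "X a a = 0"
  shows "X a b + X b a = 0"
proof (rule linear_coeff_zero_if_quadratic_nonneg)
  fix w
  show "0 \<le> w * (X a b + X b a) + w * w * X b b"
    using assms(4) quad_form_two_point[OF assms(1-3), of X w] assms(5) by (metis add_0)
qed

lemma double_sum_insert_vanishing:
  fixes g :: "'a \<Rightarrow> 'a \<Rightarrow> real"
  assumes "finite K" "a \<notin> K"
    and "\<And>j. j \<in> insert a K \<Longrightarrow> g a j = 0" "\<And>j. j \<in> insert a K \<Longrightarrow> g j a = 0"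
  shows "(\<Sum>i\<in>insert a K. \<Sum>j\<in>insert a K. g i j) = (\<Sum>i\<in>K. \<Sum>j\<in>K. g i j)"
  using assms by (simp cong: sum.cong_simp)

lemma quad_form_insert_zero_arg:
  assumes "finite K" "a \<notin> K"
  shows "quad_form (insert a K) X (x(a := 0)) = quad_form K X x"
proof -
  have "quad_form (insert a K) X (x(a := 0)) = quad_form K X (x(a := 0))"
    unfolding quad_form_def by (rule double_sum_insert_vanishing) (use assms in auto)
  also have "\<dots> = quad_form K X x"
    unfolding quad_form_def using assms(2) by (intro sum.cong refl) auto
  finally show ?thesis .
qed

lemma quad_form_insert_zero_row:
  assumes "finite K" "a \<notin> K" "\<And>j. X a j = 0" "\<And>j. X j a = 0"
  shows "quad_form (insert a K) X x = quad_form K X x"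
  unfolding quad_form_def by (rule double_sum_insert_vanishing) (use assms in auto)

lemma quad_form_rank_one_update:
  "quad_form K (\<lambda>i j. X i j - r i * r j / c) y = quad_form K X y - (\<Sum>i\<in>K. r i * y i)\<^sup>2 / c"
  by (simp add: quad_form_def power2_eq_square sum_product sum_divide_distrib sum_subtractf algebra_simps)

lemma frob_on_rank_one_update:
  "frob_on K M (\<lambda>i j. X i j - r i * r j / c) = frob_on K M X - quad_form K M r / c"
  by (simp add: frob_on_def quad_form_def sum_divide_distrib sum_subtractf algebra_simps)

lemma psd_form_schur_complement:
  assumes "finite K" "a \<notin> K" and sym: "\<forall>i j. X i j = X j i"
    and psd: "\<forall>x. 0 \<le> quad_form (insert a K) X x" and pos: "0 < X a a"
  shows "0 \<le> quad_form K (\<lambda>i j. X i j - X a i * X a j / X a a) x"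
proof -
  let ?S = "\<lambda>i j. X i j - X a i * X a j / X a a"
  define y where "y = x(a := - (\<Sum>k\<in>K. X a k * x k) / X a a)"
  have "quad_form K ?S x = quad_form K ?S y"
    unfolding quad_form_def y_def using assms(2) by (intro sum.cong refl) auto
  also have "\<dots> = quad_form (insert a K) ?S y"
    using pos sym by (intro quad_form_insert_zero_row[symmetric, OF assms(1,2)]) auto
  also have "\<dots> = quad_form (insert a K) X y - (\<Sum>i\<in>insert a K. X a i * y i)\<^sup>2 / X a a"
    by (rule quad_form_rank_one_update)
  also have "(\<Sum>i\<in>insert a K. X a i * y i) = X a a * y a + (\<Sum>i\<in>K. X a i * x i)"
    unfolding y_def using assms(1,2) by (simp, intro sum.cong) auto
  also have "\<dots> = 0"
    using pos by (simp add: y_def)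
  finally show ?thesis using psd by simp
qed

(* Induction on K: a vanishing diagonal entry forces its row to vanish; otherwise the Schur
   complement of that entry is positive semidefinite on the smaller index set. *)
lemma frob_on_psd_forms_nonneg:
  assumes "finite K" "\<forall>i j. X i j = X j i"
    "\<forall>x. 0 \<le> quad_form K X x" "\<forall>x. 0 \<le> quad_form K M x"
  shows "0 \<le> frob_on K M X"
  using assms
proof (induction K arbitrary: X rule: finite_induct)
  case empty
  show ?case by (simp add: frob_on_def)
next
  case (insert a K)
  have M: "\<forall>x. 0 \<le> quad_form K M x"
    using insert.prems(3) quad_form_insert_zero_arg[OF insert.hyps(1,2)] by metis
  consider "X a a = 0" | "0 < X a a"
    using psd_form_diag_nonneg[OF _ _ insert.prems(2)] insert.hyps(1) by fastforce
  then show ?case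
  proof cases
    case 1
    have row: "X a j = 0" "X j a = 0" if "j \<in> insert a K" for j
      using psd_form_zero_diag[OF _ _ that insert.prems(2) 1] insert.hyps(1) insert.prems(1) by auto
    have X: "\<forall>x. 0 \<le> quad_form K X x"
      using insert.prems(2) quad_form_insert_zero_arg[OF insert.hyps(1,2)] by metis
    have "frob_on (insert a K) M X = frob_on K M X"
      unfolding frob_on_def using row by (subst double_sum_insert_vanishing) (use insert.hyps in auto)
    then show ?thesis using insert.IH[OF insert.prems(1) X M] by simp
  next
    case 2
    define S where "S = (\<lambda>i j. X i j - X a i * X a j / X a a)"
    have "frob_on (insert a K) M X = frob_on (insert a K) M S + quad_form (insert a K) M (X a) / X a a"
      unfolding S_def frob_on_rank_one_update by simp
    also have "frob_on (insert a K) M S = frob_on K M S"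
      unfolding frob_on_def using 2 insert.prems(1)
      by (intro double_sum_insert_vanishing insert.hyps) (auto simp: S_def)
    finally have split: "frob_on (insert a K) M X = frob_on K M S + quad_form (insert a K) M (X a) / X a a" .
    have "0 \<le> frob_on K M S"
      using insert.prems(1) psd_form_schur_complement[OF insert.hyps insert.prems(1,2) 2]
      by (intro insert.IH M) (auto simp: S_def mult.commute)
    then show ?thesis unfolding split using insert.prems(3) 2 by simp
  qed
qed

lemma inner_mult_vec_eq_quad_form: "x \<bullet> (X *v x) = quad_form UNIV (\<lambda>i j. X$i$j) (($) x)"
  unfolding inner_vec_def matrix_vector_mult_def quad_form_def
  by (simp add: sum_distrib_left mult.assoc mult.left_commute)

lemma psd_iff_quad_form: "psd X \<longleftrightarrow> (\<forall>f. 0 \<le> quad_form UNIV (\<lambda>i j. X$i$j) f)"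
proof
  assume "psd X"
  show "\<forall>f. 0 \<le> quad_form UNIV (\<lambda>i j. X$i$j) f"
  proof
    fix f :: "'a \<Rightarrow> real"
    have "0 \<le> quad_form UNIV (\<lambda>i j. X$i$j) (($) (vec_lambda f))"
      using \<open>psd X\<close> unfolding psd_def inner_mult_vec_eq_quad_form by blast
    then show "0 \<le> quad_form UNIV (\<lambda>i j. X$i$j) f" by (simp add: vec_lambda_inverse)
  qed
qed (simp add: psd_def inner_mult_vec_eq_quad_form)

lemma symmetric_matrix_entries: "transpose X = X \<Longrightarrow> X$i$j = X$j$i"
  by (metis transpose_def vec_lambda_beta)

lemma frob_inner_psd_nonneg:
  assumes "psd M" "psd X" "transpose X = X"
  shows "0 \<le> frob_inner M X"
  using frob_on_psd_forms_nonneg[of UNIV "\<lambda>i j. X$i$j" "\<lambda>i j. M$i$j"] assms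
  by (simp add: frob_inner_def frob_on_def psd_iff_quad_form symmetric_matrix_entries)

lemma psd_diag_nonneg: "psd X \<Longrightarrow> 0 \<le> X$i$i"
  using psd_form_diag_nonneg[of UNIV i "\<lambda>i j. X$i$j"] by (simp add: psd_iff_quad_form)

lemma psd_offdiag_abs_le:
  assumes "psd X" "transpose X = X"
  shows "\<bar>X$i$j\<bar> \<le> X$i$i + X$j$j"
proof -
  have "0 \<le> X$i$i + w * (X$i$j + X$j$i) + w * w * X$j$j" for w
  proof -
    have "0 \<le> quad_form UNIV (\<lambda>i j. X$i$j) (\<lambda>k. of_bool (k = i) + w * of_bool (k = j))"
      using assms(1) unfolding psd_iff_quad_form by blast
    then show ?thesis using quad_form_two_point[of UNIV i j "\<lambda>i j. X$i$j" w] by simp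
  qed
  from this[of 1] this[of "-1"] show ?thesis
    using symmetric_matrix_entries[OF assms(2), of i j] by (simp add: abs_le_iff)
qed

definition diag_of :: "real^'k^'k \<Rightarrow> real^'k" where
  "diag_of X = (\<chi> k. X$k$k)"

definition outer :: "real^'k \<Rightarrow> real^'k^'k" where
  "outer x = (\<chi> i j. x$i * x$j)"

lemma diag_of_zero [simp]: "diag_of 0 = 0"
  by (simp add: diag_of_def vec_eq_iff)

lemma frob_inner_diag_mat: "frob_inner (diag_mat v) X = v \<bullet> diag_of X"
  unfolding frob_inner_def diag_mat_def diag_of_def inner_vec_def
  by (simp add: if_distrib if_distribR sum.delta cong: if_cong)

lemma frob_inner_diff_left: "frob_inner (M - N) X = frob_inner M X - frob_inner N X"
  unfolding frob_inner_def by (simp add: sum_subtractf left_diff_distrib)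

lemma frob_inner_combination_right:
  "frob_inner M (a *\<^sub>R X + b *\<^sub>R Y) = a * frob_inner M X + b * frob_inner M Y"
  unfolding frob_inner_def by (simp add: sum.distrib sum_distrib_left algebra_simps)

lemma frob_inner_zero_right [simp]: "frob_inner M 0 = 0"
  unfolding frob_inner_def by simp

lemma frob_inner_outer: "frob_inner M (outer x) = x \<bullet> (M *v x)"
  unfolding frob_inner_def outer_def inner_mult_vec_eq_quad_form quad_form_def
  by (simp add: algebra_simps)

lemma diag_of_outer: "diag_of (outer x) = (\<chi> k. x$k * x$k)"
  unfolding diag_of_def outer_def by simp

lemma psd_scaleR_outer:
  assumes "0 \<le> c"
  shows "psd (c *\<^sub>R outer x)"
proof -
  have "y \<bullet> ((c *\<^sub>R outer x) *v y) = c * (x \<bullet> y)\<^sup>2" for y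
    unfolding inner_mult_vec_eq_quad_form quad_form_def power2_eq_square
    by (simp add: outer_def inner_vec_def sum_product sum_distrib_left algebra_simps)
  then show ?thesis unfolding psd_def using assms by simp
qed

lemma transpose_scaleR_outer: "transpose (c *\<^sub>R outer x) = c *\<^sub>R outer x"
  unfolding outer_def transpose_def by (simp add: vec_eq_iff mult.commute)

lemma psd_combination:
  assumes "psd X" "psd Y" "0 \<le> a" "0 \<le> b"
  shows "psd (a *\<^sub>R X + b *\<^sub>R Y)"
proof -
  have "(a *\<^sub>R X + b *\<^sub>R Y) *v x = a *\<^sub>R (X *v x) + b *\<^sub>R (Y *v x)" for x
    by (simp add: vec_eq_iff matrix_vector_mult_def sum.distrib sum_distrib_left algebra_simps)
  then show ?thesis using assms unfolding psd_def by (simp add: inner_add_right)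
qed

lemma psd_diag_mono:
  assumes "psd (diag_mat v - H)" "\<And>k. v$k \<le> w$k"
  shows "psd (diag_mat w - H)"
  unfolding psd_def
proof
  fix x
  have "x \<bullet> ((diag_mat w - H) *v x) - x \<bullet> ((diag_mat v - H) *v x) = (w - v) \<bullet> (\<chi> k. x$k * x$k)"
    unfolding frob_inner_outer[symmetric] frob_inner_diff_left frob_inner_diag_mat diag_of_outer
    by (simp add: inner_diff_left)
  moreover have "0 \<le> (w - v) \<bullet> (\<chi> k. x$k * x$k)"
    unfolding inner_vec_def using assms(2) by (intro sum_nonneg) simp
  moreover have "0 \<le> x \<bullet> ((diag_mat v - H) *v x)" using assms(1) unfolding psd_def by blast
  ultimately show "0 \<le> x \<bullet> ((diag_mat w - H) *v x)" by linarith
qed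

lemma psd_if_frob_inner_bounded_below:
  assumes "\<And>X. transpose X = X \<Longrightarrow> psd X \<Longrightarrow> c \<le> frob_inner M X"
  shows "psd M"
  unfolding psd_def
proof
  fix x
  define q where "q = x \<bullet> (M *v x)"
  have scaled: "c \<le> s * q" if "0 \<le> s" for s
    using assms[OF transpose_scaleR_outer psd_scaleR_outer[OF that]]
    by (simp add: q_def frob_inner_combination_right[of M s _ 0, simplified] frob_inner_outer)
  show "0 \<le> q"
  proof (rule ccontr)
    assume "\<not> 0 \<le> q"
    then have "q < 0" by simp
    then have "c \<le> (\<bar>c\<bar> + 1) / - q * q" by (intro scaled) (simp add: divide_nonneg_neg)
    also have "\<dots> = - (\<bar>c\<bar> + 1)" using \<open>q < 0\<close> by simp
    finally show False using abs_ge_minus_self[of c] by linarith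
  qed
qed

lemma sum_UNIV_sum_type:
  "(\<Sum>k\<in>UNIV. f k) = (\<Sum>i\<in>UNIV. f (Inl i)) + (\<Sum>j\<in>UNIV. f (Inr j))"
  for f :: "'a::finite + 'b::finite \<Rightarrow> 'c::comm_monoid_add"
proof -
  have "(\<Sum>k\<in>UNIV. f k) = (\<Sum>k\<in>UNIV <+> UNIV. f k)" by simp
  also have "\<dots> = (\<Sum>i\<in>UNIV. f (Inl i)) + (\<Sum>j\<in>UNIV. f (Inr j))"
    by (subst sum.Plus) (auto simp: o_def)
  finally show ?thesis .
qed

section \<open>Weak duality\<close>

lemma theta_eq:
  assumes "2 < p"
  shows "theta p = (2/p) powr (2/(p-2)) * (1 - 2/p)"
proof -
  have "p/(p-2) = 2/(p-2) + 1" using assms by (simp add: field_simps)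
  then have "(2/p) powr (p/(p-2)) = (2/p) powr (2/(p-2)) * (2/p)"
    using assms by (simp add: powr_add)
  then show ?thesis unfolding theta_def by (simp add: algebra_simps)
qed

lemma theta_pos: "2 < p \<Longrightarrow> 0 < theta p"
  by (subst theta_eq) (auto simp: field_simps)

lemma weighted_young_bound:
  fixes b e x u v :: real
  assumes b: "0 < b" "b < 1" and e: "e * (1 - b) = b" and x: "0 \<le> x" and u: "0 < u" and v: "0 < v"
  shows "v * x \<le> u * x powr (1/b) + b powr e * (1 - b) * (v powr (e + 1) / u powr e)"
proof (cases "x = 0")
  case True
  then show ?thesis using b u v by simp
next
  case False
  with x have x0: "0 < x" by simp
  define P where "P = u * x powr (1/b) / b"
  define Q where "Q = b powr e * v powr (e + 1) / u powr e"
  have "P powr b = u powr b * x * b powr (-b)"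
    unfolding P_def using u x0 b
    by (simp add: powr_mult powr_divide powr_powr powr_minus divide_inverse inverse_powr)
  moreover have "Q powr (1 - b) = b powr b * v / u powr b"
  proof -
    have "Q powr (1 - b) = b powr (e * (1 - b)) * v powr ((e + 1) * (1 - b)) / u powr (e * (1 - b))"
      unfolding Q_def using u v b by (simp add: powr_mult powr_divide powr_powr)
    also have "(e + 1) * (1 - b) = 1" using e by (simp add: algebra_simps)
    finally show ?thesis using e v by simp
  qed
  ultimately have "P powr b * Q powr (1 - b) = (u powr b * x * b powr (-b)) * (b powr b * v / u powr b)"
    by simp
  also have "\<dots> = v * x"
    using u b by (simp add: powr_minus field_simps)
  finally have "P powr b * Q powr (1 - b) = v * x" .
  moreover have "P powr b * Q powr (1 - b) \<le> b * P + (1 - b) * Q"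
    using Youngs_inequality_0[of b "1 - b" P Q] u v x0 b by (simp add: P_def Q_def)
  moreover have "b * P + (1 - b) * Q = u * x powr (1/b) + b powr e * (1 - b) * (v powr (e + 1) / u powr e)"
    unfolding P_def Q_def using b by (simp add: field_simps)
  ultimately show ?thesis by simp
qed

lemma dual_term_bound:
  fixes p x t u v :: real
  assumes p: "2 < p" and x: "0 \<le> x" and t: "0 \<le> t" and u: "0 \<le> u"
    and dual: "v powr (p/(p-2)) \<le> t * u powr (2/(p-2))"
  shows "v * x \<le> u * x powr (p/2) + theta p * t"
proof -
  consider "v \<le> 0" | "0 < v" "u = 0" | "0 < v" "0 < u" using u by linarith
  then show ?thesis
  proof cases
    case 1
    then have "v * x \<le> 0" using x by (simp add: mult_nonpos_nonneg)
    moreover have "0 \<le> u * x powr (p/2) + theta p * t" using u t theta_pos[OF p] by simp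
    ultimately show ?thesis by linarith
  next
    case 2
    then show ?thesis using dual by simp
  next
    case 3
    have b: "0 < 2/p" "2/p < 1" and e: "2/(p-2) * (1 - 2/p) = 2/p" using p by (auto simp: field_simps)
    have "v * x \<le> u * x powr (1/(2/p)) + (2/p) powr (2/(p-2)) * (1 - 2/p) * (v powr (2/(p-2) + 1) / u powr (2/(p-2)))"
      using weighted_young_bound[OF b e x] 3 by simp
    also have "1/(2/p) = p/2" by simp
    also have "2/(p-2) + 1 = p/(p-2)" using p by (simp add: field_simps)
    also have "(2/p) powr (2/(p-2)) * (1 - 2/p) = theta p" using theta_eq[OF p] by simp
    also have "v powr (p/(p-2)) / u powr (2/(p-2)) \<le> t"
      using dual 3 by (simp add: pos_divide_le_eq)
    finally show ?thesis using theta_pos[OF p] by (simp add: mult_left_mono)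
  qed
qed

lemma block_weak_duality:
  fixes v t x :: "'a::finite \<Rightarrow> real"
  assumes p: "2 < p" and x: "\<And>i. 0 \<le> x i" and t: "\<And>i. 0 \<le> t i" and u: "0 \<le> u"
    and dual: "\<And>i. v i powr (p/(p-2)) \<le> t i * u powr (2/(p-2))"
    and ball: "(\<Sum>i\<in>UNIV. \<bar>x i\<bar> powr (p/2)) \<le> 1"
  shows "(\<Sum>i\<in>UNIV. v i * x i) \<le> u + theta p * (\<Sum>i\<in>UNIV. t i)"
proof -
  have "(\<Sum>i\<in>UNIV. v i * x i) \<le> (\<Sum>i\<in>UNIV. u * \<bar>x i\<bar> powr (p/2) + theta p * t i)"
    by (rule sum_mono) (use dual_term_bound[OF p x t u dual] x in simp)
  also have "\<dots> = u * (\<Sum>i\<in>UNIV. \<bar>x i\<bar> powr (p/2)) + theta p * (\<Sum>i\<in>UNIV. t i)"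
    by (simp add: sum.distrib sum_distrib_left)
  also have "u * (\<Sum>i\<in>UNIV. \<bar>x i\<bar> powr (p/2)) \<le> u" using ball u by (simp add: mult_left_le)
  finally show ?thesis by simp
qed

lemma pv_weak_duality:
  fixes A :: "real^'n::finite^'m::finite" and X :: "real^('m + 'n)^('m + 'n)"
  assumes p: "2 < p" and X: "pv_primal_feasible p X" and dual: "pv_dual_feasible p A u1 u2 t v"
  shows "frob_inner (half_block A) X \<le> pv_dual_obj p u1 u2 t"
proof -
  have X_psd: "psd X" "transpose X = X"
    and X_ball: "(\<Sum>i\<in>UNIV. \<bar>X $ Inl i $ Inl i\<bar> powr (p/2)) \<le> 1"
      "(\<Sum>j\<in>UNIV. \<bar>X $ Inr j $ Inr j\<bar> powr (p/2)) \<le> 1"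
    using X unfolding pv_primal_feasible_def by auto
  have X_diag: "0 \<le> X$k$k" for k using psd_diag_nonneg[OF X_psd(1)] .
  have "0 \<le> frob_inner (diag_mat v - half_block A) X"
    using dual X_psd by (intro frob_inner_psd_nonneg) (auto simp: pv_dual_feasible_def)
  then have "frob_inner (half_block A) X \<le> v \<bullet> diag_of X"
    by (simp add: frob_inner_diff_left frob_inner_diag_mat)
  also have "\<dots> = (\<Sum>i\<in>UNIV. v$Inl i * X$Inl i$Inl i) + (\<Sum>j\<in>UNIV. v$Inr j * X$Inr j$Inr j)"
    unfolding inner_vec_def diag_of_def by (simp add: sum_UNIV_sum_type)
  also have "(\<Sum>i\<in>UNIV. v$Inl i * X$Inl i$Inl i) \<le> u1 + theta p * (\<Sum>i\<in>UNIV. t$Inl i)"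
    using dual X_diag by (intro block_weak_duality[OF p _ _ _ _ X_ball(1)]) (auto simp: pv_dual_feasible_def)
  also have "(\<Sum>j\<in>UNIV. v$Inr j * X$Inr j$Inr j) \<le> u2 + theta p * (\<Sum>j\<in>UNIV. t$Inr j)"
    using dual X_diag by (intro block_weak_duality[OF p _ _ _ _ X_ball(2)]) (auto simp: pv_dual_feasible_def)
  finally show ?thesis
    unfolding pv_dual_obj_def sum_UNIV_sum_type[of "($) t"] by (simp add: algebra_simps)
qed

lemma pv_primal_feasible_diag_le_one:
  assumes p: "2 < p" and X: "pv_primal_feasible p X"
  shows "\<bar>X$k$k\<bar> \<le> 1"
proof (rule ccontr)
  assume "\<not> \<bar>X$k$k\<bar> \<le> 1"
  then have big: "1 < \<bar>X$k$k\<bar> powr (p/2)" using p by (intro gr_one_powr) auto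
  have "\<bar>X$k$k\<bar> powr (p/2) \<le> 1"
  proof (cases k)
    case (Inl i)
    have "\<bar>X$Inl i$Inl i\<bar> powr (p/2) \<le> (\<Sum>i\<in>UNIV. \<bar>X $ Inl i $ Inl i\<bar> powr (p/2))"
      by (rule member_le_sum) auto
    then show ?thesis using X unfolding Inl pv_primal_feasible_def by linarith
  next
    case (Inr j)
    have "\<bar>X$Inr j$Inr j\<bar> powr (p/2) \<le> (\<Sum>j\<in>UNIV. \<bar>X $ Inr j $ Inr j\<bar> powr (p/2))"
      by (rule member_le_sum) auto
    then show ?thesis using X unfolding Inr pv_primal_feasible_def by linarith
  qed
  with big show False by simp
qed

lemma pv_primal_objective_le:
  assumes p: "2 < p" and X: "pv_primal_feasible p X"
  shows "frob_inner M X \<le> (\<Sum>i\<in>UNIV. \<Sum>j\<in>UNIV. \<bar>M$i$j\<bar> * 2)"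
proof -
  have X_psd: "psd X" "transpose X = X" using X unfolding pv_primal_feasible_def by auto
  have "M$i$j * X$i$j \<le> \<bar>M$i$j\<bar> * 2" for i j
  proof -
    have "\<bar>X$i$j\<bar> \<le> 2"
      using psd_offdiag_abs_le[OF X_psd, of i j] pv_primal_feasible_diag_le_one[OF p X, of i]
        pv_primal_feasible_diag_le_one[OF p X, of j] by (simp add: abs_le_iff)
    have "M$i$j * X$i$j \<le> \<bar>M$i$j\<bar> * \<bar>X$i$j\<bar>" by (simp flip: abs_mult)
    also have "\<dots> \<le> \<bar>M$i$j\<bar> * 2" using \<open>\<bar>X$i$j\<bar> \<le> 2\<close> by (simp add: mult_left_mono)
    finally show ?thesis .
  qed
  then show ?thesis unfolding frob_inner_def by (intro sum_mono)
qed

lemma pv_primal_objective_bounded: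
  "2 < p \<Longrightarrow> bdd_above {frob_inner M X | X. pv_primal_feasible p X}"
  using pv_primal_objective_le by (intro bdd_aboveI) blast

lemma pv_norm_upper:
  assumes "2 < p" "pv_primal_feasible p X"
  shows "frob_inner (half_block A) X \<le> pv_norm p A"
  unfolding pv_norm_def using assms pv_primal_objective_bounded by (intro cSup_upper) auto

lemma pv_norm_le_dual_obj:
  fixes A :: "real^'n::finite^'m::finite"
  assumes p: "2 < p" and dual: "pv_dual_feasible p A u1 u2 t v"
  shows "pv_norm p A \<le> pv_dual_obj p u1 u2 t"
proof -
  have "pv_primal_feasible p (0 :: real^('m + 'n)^('m + 'n))"
    unfolding pv_primal_feasible_def psd_def transpose_def by (simp add: vec_eq_iff)
  then show ?thesis
    unfolding pv_norm_def using pv_weak_duality[OF p _ dual] by (intro cSup_least) auto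
qed

section \<open>Strong duality\<close>

(* With g = Inl or g = Inr this is the l_s unit ball of one block of coordinates. *)
definition coord_lp_ball :: "real \<Rightarrow> ('i::finite \<Rightarrow> 'k) \<Rightarrow> (real^'k) set" where
  "coord_lp_ball s g = {x. (\<Sum>i\<in>UNIV. \<bar>x $ g i\<bar> powr s) \<le> 1}"

lemma powr_convex_combination:
  fixes s u w a b :: real
  assumes s: "1 \<le> s" and a: "0 \<le> a" and b: "0 \<le> b"
    and u: "0 \<le> u" and w: "0 \<le> w" and uw: "u + w = 1"
  shows "(u * a + w * b) powr s \<le> u * a powr s + w * b powr s"
proof -
  have shrink: "c powr s * d powr s \<le> c * d powr s" if "0 \<le> c" "c \<le> 1" for c d :: real
  proof -
    have "c powr s \<le> c powr 1" using powr_mono'[of 1 s c] that s by simp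
    then show ?thesis using that by (simp add: mult_right_mono)
  qed
  consider "a = 0" | "b = 0" | "0 < a" "0 < b" using a b by fastforce
  then show ?thesis
  proof cases
    case 1
    then show ?thesis using shrink[of w b] u w uw b by (simp add: powr_mult)
  next
    case 2
    then show ?thesis using shrink[of u a] u w uw a by (simp add: powr_mult)
  next
    case 3
    then show ?thesis
      using convex_onD[OF powr_convex[OF s], of w a b] u w uw by (simp add: eq_diff_eq[symmetric])
  qed
qed

lemma abs_powr_convex_combination:
  fixes s u w a b :: real
  assumes s: "1 \<le> s" and u: "0 \<le> u" and w: "0 \<le> w" and uw: "u + w = 1"
  shows "\<bar>u * a + w * b\<bar> powr s \<le> u * \<bar>a\<bar> powr s + w * \<bar>b\<bar> powr s"
proof -
  have "\<bar>u * a + w * b\<bar> \<le> u * \<bar>a\<bar> + w * \<bar>b\<bar>"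
    using abs_triangle_ineq[of "u * a" "w * b"] u w by (simp add: abs_mult)
  then have "\<bar>u * a + w * b\<bar> powr s \<le> (u * \<bar>a\<bar> + w * \<bar>b\<bar>) powr s"
    using s by (intro powr_mono2) auto
  also have "\<dots> \<le> u * \<bar>a\<bar> powr s + w * \<bar>b\<bar> powr s"
    using powr_convex_combination[OF s _ _ u w uw] by simp
  finally show ?thesis .
qed

lemma convex_coord_lp_ball:
  fixes g :: "'i::finite \<Rightarrow> 'k::finite"
  assumes s: "1 \<le> s"
  shows "convex (coord_lp_ball s g)"
  unfolding convex_def coord_lp_ball_def
proof (intro ballI allI impI, simp only: mem_Collect_eq)
  fix x y :: "real^'k" and u w :: real
  assume x: "(\<Sum>i\<in>UNIV. \<bar>x $ g i\<bar> powr s) \<le> 1" and y: "(\<Sum>i\<in>UNIV. \<bar>y $ g i\<bar> powr s) \<le> 1"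
    and u: "0 \<le> u" and w: "0 \<le> w" and uw: "u + w = 1"
  have "(\<Sum>i\<in>UNIV. \<bar>(u *\<^sub>R x + w *\<^sub>R y) $ g i\<bar> powr s)
      \<le> (\<Sum>i\<in>UNIV. u * \<bar>x $ g i\<bar> powr s + w * \<bar>y $ g i\<bar> powr s)"
    by (intro sum_mono) (simp add: abs_powr_convex_combination[OF s u w uw])
  also have "\<dots> = u * (\<Sum>i\<in>UNIV. \<bar>x $ g i\<bar> powr s) + w * (\<Sum>i\<in>UNIV. \<bar>y $ g i\<bar> powr s)"
    by (simp add: sum.distrib sum_distrib_left)
  also have "\<dots> \<le> u + w"
    using x y u w by (intro add_mono mult_left_le) auto
  finally show "(\<Sum>i\<in>UNIV. \<bar>(u *\<^sub>R x + w *\<^sub>R y) $ g i\<bar> powr s) \<le> 1" using uw by simp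
qed

lemma zero_in_coord_lp_ball: "0 < s \<Longrightarrow> 0 \<in> coord_lp_ball s g"
  unfolding coord_lp_ball_def by simp

lemma axis_in_coord_lp_ball:
  assumes "inj g" "\<bar>c\<bar> = 1"
  shows "axis k c \<in> coord_lp_ball s g"
proof -
  have "(\<Sum>i\<in>UNIV. \<bar>axis k c $ g i\<bar> powr s) = (\<Sum>i\<in>UNIV. of_bool (g i = k))"
    using assms(2) by (intro sum.cong) (auto simp: axis_def)
  also have "\<dots> \<le> 1"
  proof (cases "k \<in> range g")
    case True
    then obtain i where "k = g i" by blast
    then show ?thesis using assms(1) by (simp add: inj_eq sum.delta)
  next
    case False
    then have "\<And>i. g i \<noteq> k" by auto
    then show ?thesis by simp
  qed
  finally show ?thesis unfolding coord_lp_ball_def by simp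
qed

lemma convex_diag_gap_set:
  assumes "convex C"
  shows "convex {(diag_of X - d, r) | X d r.
    transpose X = X \<and> psd X \<and> d \<in> C \<and> r < frob_inner H X - N}"
  unfolding convex_def
proof (intro ballI allI impI)
  fix z1 z2 and u w :: real
  assume "z1 \<in> {(diag_of X - d, r) | X d r. transpose X = X \<and> psd X \<and> d \<in> C \<and> r < frob_inner H X - N}"
    and "z2 \<in> {(diag_of X - d, r) | X d r. transpose X = X \<and> psd X \<and> d \<in> C \<and> r < frob_inner H X - N}"
    and u: "0 \<le> u" and w: "0 \<le> w" and uw: "u + w = 1"
  then obtain X1 d1 r1 X2 d2 r2 where
    z: "z1 = (diag_of X1 - d1, r1)" "z2 = (diag_of X2 - d2, r2)"
    and X: "transpose X1 = X1" "psd X1" "transpose X2 = X2" "psd X2"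
    and d: "d1 \<in> C" "d2 \<in> C"
    and r: "r1 < frob_inner H X1 - N" "r2 < frob_inner H X2 - N"
    by blast
  let ?X = "u *\<^sub>R X1 + w *\<^sub>R X2" and ?d = "u *\<^sub>R d1 + w *\<^sub>R d2"
  have "u *\<^sub>R z1 + w *\<^sub>R z2 = (diag_of ?X - ?d, u * r1 + w * r2)"
    unfolding z diag_of_def by (simp add: vec_eq_iff algebra_simps)
  moreover have "transpose ?X = ?X" using X by (simp add: transpose_def vec_eq_iff)
  moreover have "psd ?X" using X u w by (intro psd_combination)
  moreover have "?d \<in> C" using assms d u w uw by (simp add: convex_def)
  moreover have "u * r1 + w * r2 < frob_inner H ?X - N"
  proof -
    have "u * r1 \<le> u * (frob_inner H X1 - N)" "w * r2 \<le> w * (frob_inner H X2 - N)"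
      using r u w by (simp_all add: mult_left_mono)
    moreover have "u * r1 < u * (frob_inner H X1 - N) \<or> w * r2 < w * (frob_inner H X2 - N)"
      using r u w uw by (cases "u = 0") auto
    ultimately have "u * r1 + w * r2 < u * (frob_inner H X1 - N) + w * (frob_inner H X2 - N)"
      by linarith
    also have "\<dots> = frob_inner H ?X - N"
      using uw by (simp add: frob_inner_combination_right algebra_simps flip: distrib_left)
    finally show ?thesis .
  qed
  ultimately show "u *\<^sub>R z1 + w *\<^sub>R z2 \<in>
    {(diag_of X - d, r) | X d r. transpose X = X \<and> psd X \<and> d \<in> C \<and> r < frob_inner H X - N}"
    by blast
qed

lemma holder_equality_vector:
  fixes w :: "'a::finite \<Rightarrow> real"
  assumes exps: "0 < e" "q = e + 1" "e * s = q"
    and w: "\<And>i. 0 \<le> w i" and a: "0 < a" "a powr q = (\<Sum>i\<in>UNIV. w i powr q)"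
  shows "(\<Sum>i\<in>UNIV. \<bar>(w i / a) powr e\<bar> powr s) = 1"
    and "(\<Sum>i\<in>UNIV. w i * (w i / a) powr e) = a"
proof -
  have "\<bar>(w i / a) powr e\<bar> powr s = w i powr q / a powr q" for i
    using w[of i] a(1) exps(3) by (simp add: powr_powr powr_divide)
  moreover have "0 < a powr q" using a(1) by simp
  ultimately show "(\<Sum>i\<in>UNIV. \<bar>(w i / a) powr e\<bar> powr s) = 1"
    using a(2) by (simp flip: sum_divide_distrib)
  have "w i * (w i / a) powr e = w i powr q / a powr e" for i
    using w[of i] a(1) exps by (cases "w i = 0") (simp_all add: powr_divide powr_add)
  then have "(\<Sum>i\<in>UNIV. w i * (w i / a) powr e) = a powr q / a powr e"
    using a(2) by (simp add: sum_divide_distrib)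
  also have "\<dots> = a" using a(1) exps(2) by (simp add: powr_add)
  finally show "(\<Sum>i\<in>UNIV. w i * (w i / a) powr e) = a" .
qed

(* The constraint involves max v 0 because powr is junk on negative bases.  With w = max v 0 and
   a its l_(p/(p-2)) norm, x = (w/a)^(2/(p-2)) attains equality in Hoelder's inequality and
   u = 2a/p is optimal. *)
lemma block_dual_attained:
  fixes v :: "'a::finite \<Rightarrow> real"
  assumes p: "2 < p"
  obtains u t x where "0 \<le> u" "\<And>i. 0 \<le> t i"
    "\<And>i. max (v i) 0 powr (p/(p-2)) \<le> t i * u powr (2/(p-2))"
    "(\<Sum>i\<in>UNIV. \<bar>x i\<bar> powr (p/2)) \<le> 1"
    "(\<Sum>i\<in>UNIV. v i * x i) = u + theta p * (\<Sum>i\<in>UNIV. t i)"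
proof -
  define q e b where "q = p/(p-2)" and "e = 2/(p-2)" and "b = 2/p"
  define w where "w i = max (v i) 0" for i
  define S where "S = (\<Sum>i\<in>UNIV. w i powr q)"
  have w: "0 \<le> w i" for i by (simp add: w_def)
  have exps: "0 < e" "q = e + 1" "e * (p/2) = q" using p by (auto simp: q_def e_def field_simps)
  have b: "0 < b" "theta p = b powr e * (1 - b)" using theta_eq[OF p] p by (auto simp: b_def e_def)
  show ?thesis
  proof (cases "S = 0")
    case True
    then have "w i = 0" for i
      using sum_nonneg_eq_0_iff[of UNIV "\<lambda>i. w i powr q"] by (simp add: S_def)
    then have "max (v i) 0 = 0" for i by (simp add: w_def)
    then show ?thesis by (intro that[of 0 "\<lambda>_. 0" "\<lambda>_. 0"]) simp_all
  next
    case False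
    then have "0 < S" by (simp add: S_def order_le_neq_trans sum_nonneg)
    define a where "a = S powr (1/q)"
    have a: "0 < a" "a powr q = S" using \<open>0 < S\<close> exps by (simp_all add: a_def powr_powr)
    define u t x where "u = b * a" and "t i = w i powr q / u powr e" and "x i = (w i / a) powr e" for i
    note holder = holder_equality_vector[OF exps w a(1) a(2)[unfolded S_def], folded x_def]
    have "(\<Sum>i\<in>UNIV. v i * x i) = (\<Sum>i\<in>UNIV. w i * x i)"
    proof (rule sum.cong[OF refl])
      fix i
      show "v i * x i = w i * x i"
        using exps(1) by (cases "0 < v i") (simp_all add: w_def x_def)
    qed
    then have pairing: "(\<Sum>i\<in>UNIV. v i * x i) = a" using holder(2) by simp
    have "theta p * (\<Sum>i\<in>UNIV. t i) = (1 - b) * (S / a powr e)"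
      using a(1) b by (simp add: t_def u_def S_def powr_mult flip: sum_divide_distrib)
    also have "S / a powr e = a" using a exps(2) by (simp flip: a(2) add: powr_add)
    finally have "u + theta p * (\<Sum>i\<in>UNIV. t i) = a" by (simp add: u_def algebra_simps)
    show ?thesis
    proof (rule that[of u t x])
      show "max (v i) 0 powr (p/(p-2)) \<le> t i * u powr (2/(p-2))" for i
        using a(1) b(1) by (simp add: t_def u_def w_def q_def e_def)
    qed (use a(1) b(1) holder(1) pairing \<open>u + _ = a\<close> in \<open>simp_all add: t_def u_def\<close>)
  qed
qed

(* Since C contains 0 and all +-e_k, the r-component mu of the separating functional is negative. *)
lemma diag_gap_separation:
  fixes H :: "real^'k::finite^'k" and C :: "(real^'k) set"
  assumes C: "convex C" "0 \<in> C" "\<And>k. axis k 1 \<in> C" "\<And>k. axis k (-1) \<in> C"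
    and bound: "\<And>X. transpose X = X \<Longrightarrow> psd X \<Longrightarrow> diag_of X \<in> C \<Longrightarrow> frob_inner H X \<le> N"
  obtains mu lam where "mu < 0"
    "\<And>X d r. transpose X = X \<Longrightarrow> psd X \<Longrightarrow> d \<in> C \<Longrightarrow> r < frob_inner H X - N \<Longrightarrow>
      0 \<le> lam \<bullet> (diag_of X - d) + mu * r"
proof -
  define S where "S = {(diag_of X - d, r) | X d r.
    transpose X = X \<and> psd X \<and> d \<in> C \<and> r < frob_inner H X - N}"
  have "0 \<notin> S"
  proof
    assume "0 \<in> S"
    then obtain X d r where z: "(0, 0) = (diag_of X - d, r)"
      and X: "transpose X = X" "psd X" "d \<in> C" "r < frob_inner H X - N"
      unfolding S_def zero_prod_def by blast
    then have "diag_of X \<in> C" "r = 0" by simp_all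
    with bound[OF X(1,2)] X(4) show False by simp
  qed
  then obtain a where "a \<noteq> 0" and sep: "\<forall>z\<in>S. 0 \<le> a \<bullet> z"
    using separating_hyperplane_set_0[OF convex_diag_gap_set[OF C(1)]] unfolding S_def by blast
  obtain lam mu where a: "a = (lam, mu)" by (cases a)
  have sep': "0 \<le> lam \<bullet> (diag_of X - d) + mu * r"
    if "transpose X = X" "psd X" "d \<in> C" "r < frob_inner H X - N" for X d r
  proof -
    have "(diag_of X - d, r) \<in> S" unfolding S_def using that by blast
    with sep have "0 \<le> (lam, mu) \<bullet> (diag_of X - d, r)" unfolding a by blast
    then show ?thesis by simp
  qed
  define r0 where "r0 = - \<bar>N\<bar> - 1"
  have r0: "r0 < frob_inner H 0 - N" "r0 < 0" by (auto simp: r0_def)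
  have zero: "transpose (0::real^'k^'k) = 0" "psd (0::real^'k^'k)"
    by (simp_all add: transpose_def psd_def vec_eq_iff)
  have "mu \<le> 0"
    using sep'[OF zero C(2) r0(1)] r0(2) by (simp add: zero_le_mult_iff)
  moreover have "mu \<noteq> 0"
  proof
    assume "mu = 0"
    have "lam $ k = 0" for k
      using sep'[OF zero C(3) r0(1)] sep'[OF zero C(4) r0(1)] \<open>mu = 0\<close>
      by (simp add: inner_axis) (meson order_antisym)
    then show False using \<open>a \<noteq> 0\<close> \<open>mu = 0\<close> by (simp add: a vec_eq_iff zero_prod_def)
  qed
  ultimately have "mu < 0" by simp
  show ?thesis by (rule that[OF \<open>mu < 0\<close> sep'])
qed

lemma diag_multiplier_exists:
  fixes H :: "real^'k::finite^'k" and C :: "(real^'k) set"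
  assumes C: "convex C" "0 \<in> C" "\<And>k. axis k 1 \<in> C" "\<And>k. axis k (-1) \<in> C"
    and bound: "\<And>X. transpose X = X \<Longrightarrow> psd X \<Longrightarrow> diag_of X \<in> C \<Longrightarrow> frob_inner H X \<le> N"
  obtains v where "\<And>X d. transpose X = X \<Longrightarrow> psd X \<Longrightarrow> d \<in> C \<Longrightarrow>
    frob_inner H X - N \<le> v \<bullet> (diag_of X - d)"
proof (rule diag_gap_separation[OF C bound])
  fix mu lam
  assume "mu < 0" and sep: "\<And>X d r. transpose X = X \<Longrightarrow> psd X \<Longrightarrow> d \<in> C \<Longrightarrow>
    r < frob_inner H X - N \<Longrightarrow> 0 \<le> lam \<bullet> (diag_of X - d) + mu * r"
  show thesis
  proof (rule that)
    fix X :: "real^'k^'k" and d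
    assume X: "transpose X = X" "psd X" and d: "d \<in> C"
    show "frob_inner H X - N \<le> (1 / - mu) *\<^sub>R lam \<bullet> (diag_of X - d)"
    proof (rule dense_le)
      fix r assume "r < frob_inner H X - N"
      then have "0 \<le> lam \<bullet> (diag_of X - d) + mu * r" by (rule sep[OF X d])
      then have "r * - mu \<le> lam \<bullet> (diag_of X - d)" by (simp add: mult.commute)
      then have "r \<le> lam \<bullet> (diag_of X - d) / - mu"
        using \<open>mu < 0\<close> by (subst pos_le_divide_eq) simp_all
      then show "r \<le> (1 / - mu) *\<^sub>R lam \<bullet> (diag_of X - d)" by simp
    qed
  qed
qed

lemma pv_multiplier_exists:
  fixes A :: "real^'n::finite^'m::finite"
  assumes p: "2 < p"
  obtains v where "psd (diag_mat v - half_block A)"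
    "\<And>d. d \<in> coord_lp_ball (p/2) Inl \<inter> coord_lp_ball (p/2) Inr \<Longrightarrow> v \<bullet> d \<le> pv_norm p A"
proof -
  define C :: "(real^('m + 'n)) set" where "C = coord_lp_ball (p/2) Inl \<inter> coord_lp_ball (p/2) Inr"
  have C: "convex C" "0 \<in> C" "\<And>k. axis k 1 \<in> C" "\<And>k. axis k (-1) \<in> C"
    using p by (simp_all add: C_def convex_Int convex_coord_lp_ball zero_in_coord_lp_ball axis_in_coord_lp_ball)
  have bound: "frob_inner (half_block A) X \<le> pv_norm p A"
    if "transpose X = X" "psd X" "diag_of X \<in> C" for X
  proof -
    have "pv_primal_feasible p X"
      using that by (simp add: pv_primal_feasible_def C_def coord_lp_ball_def diag_of_def)
    then show ?thesis by (rule pv_norm_upper[OF p])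
  qed
  obtain v where v: "\<And>X d. transpose X = X \<Longrightarrow> psd X \<Longrightarrow> d \<in> C \<Longrightarrow>
      frob_inner (half_block A) X - pv_norm p A \<le> v \<bullet> (diag_of X - d)"
    using diag_multiplier_exists[OF C bound] by blast
  have "- pv_norm p A \<le> frob_inner (diag_mat v - half_block A) X"
    if "transpose X = X" "psd X" for X
    using v[OF that C(2)] by (simp add: frob_inner_diff_left frob_inner_diag_mat)
  then have "psd (diag_mat v - half_block A)" by (rule psd_if_frob_inner_bounded_below)
  moreover have zero: "transpose (0::real^('m + 'n)^('m + 'n)) = 0" "psd (0::real^('m + 'n)^('m + 'n))"
    by (simp_all add: transpose_def psd_def vec_eq_iff)
  have "v \<bullet> d \<le> pv_norm p A" if "d \<in> C" for d
    using v[OF zero that] by simp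
  ultimately show ?thesis unfolding C_def by (rule that)
qed

lemma pv_dual_attained_le_norm:
  fixes A :: "real^'n::finite^'m::finite"
  assumes p: "2 < p"
  obtains u1 u2 t v where "pv_dual_feasible p A u1 u2 t v" "pv_dual_obj p u1 u2 t \<le> pv_norm p A"
proof -
  obtain v where v_psd: "psd (diag_mat v - half_block A)"
    and v_ball: "\<And>d. d \<in> coord_lp_ball (p/2) Inl \<inter> coord_lp_ball (p/2) Inr \<Longrightarrow> v \<bullet> d \<le> pv_norm p A"
    using pv_multiplier_exists[OF p] by blast
  have w_psd: "psd (diag_mat (\<chi> k. max (v$k) 0) - half_block A)"
    using v_psd by (rule psd_diag_mono) simp
  obtain u1 t1 x1 where 1: "0 \<le> u1" "\<And>i. 0 \<le> t1 i"
    "\<And>i. max (v $ Inl i) 0 powr (p/(p-2)) \<le> t1 i * u1 powr (2/(p-2))"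
    "(\<Sum>i\<in>UNIV. \<bar>x1 i\<bar> powr (p/2)) \<le> 1"
    "(\<Sum>i\<in>UNIV. v $ Inl i * x1 i) = u1 + theta p * (\<Sum>i\<in>UNIV. t1 i)"
    by (rule block_dual_attained[OF p, where v = "\<lambda>i. v $ Inl i"]) blast
  obtain u2 t2 x2 where 2: "0 \<le> u2" "\<And>j. 0 \<le> t2 j"
    "\<And>j. max (v $ Inr j) 0 powr (p/(p-2)) \<le> t2 j * u2 powr (2/(p-2))"
    "(\<Sum>j\<in>UNIV. \<bar>x2 j\<bar> powr (p/2)) \<le> 1"
    "(\<Sum>j\<in>UNIV. v $ Inr j * x2 j) = u2 + theta p * (\<Sum>j\<in>UNIV. t2 j)"
    by (rule block_dual_attained[OF p, where v = "\<lambda>j. v $ Inr j"]) blast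
  define t where "t = (\<chi> k. case k of Inl i \<Rightarrow> t1 i | Inr j \<Rightarrow> t2 j)"
  define d where "d = (\<chi> k. case k of Inl i \<Rightarrow> x1 i | Inr j \<Rightarrow> x2 j)"
  have "pv_dual_feasible p A u1 u2 t (\<chi> k. max (v$k) 0)"
    using 1 2 w_psd unfolding pv_dual_feasible_def by (auto simp: t_def split: sum.split)
  moreover have "pv_dual_obj p u1 u2 t = v \<bullet> d"
    using 1(5) 2(5) unfolding pv_dual_obj_def inner_vec_def
    by (simp add: sum_UNIV_sum_type[where f = "\<lambda>k. _ k"] t_def d_def algebra_simps)
  moreover have "v \<bullet> d \<le> pv_norm p A"
    using 1(4) 2(4) by (intro v_ball) (simp add: coord_lp_ball_def d_def)
  ultimately show ?thesis using that by auto
qed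

theorem proposition3p3:
  fixes A :: "real^'n^'m" and p :: real
  assumes "p \<in> \<rat>" and "p > 2"
  shows "theta p > 0 \<and>
    (\<exists>u1 u2 t v. pv_dual_feasible p A u1 u2 t v \<and> pv_dual_obj p u1 u2 t = pv_norm p A) \<and>
    (\<forall>u1 u2 t v. pv_dual_feasible p A u1 u2 t v \<longrightarrow> pv_norm p A \<le> pv_dual_obj p u1 u2 t)"
proof -
  have p: "2 < p" using assms(2) .
  obtain u1 u2 t v where feasible: "pv_dual_feasible p A u1 u2 t v"
    and below: "pv_dual_obj p u1 u2 t \<le> pv_norm p A"
    using pv_dual_attained_le_norm[OF p] .
  have "pv_dual_obj p u1 u2 t = pv_norm p A"
    using below pv_norm_le_dual_obj[OF p feasible] by linarith
  then show ?thesis using theta_pos[OF p] feasible pv_norm_le_dual_obj[OF p] by blast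
qed

end
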